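(* Let $f\colon I\to I$ be continuous and $k\ge1$, and assume $\mathrm{Per}(f,k)$ is a Cantor set. Fix $x\in\mathrm{Per}(f,k)$ and $\varepsilon>0$, and let $\mu_x$ be the unique $f$-invariant Borel probability measure supported on the orbit of $x$. Then there is a non-atomic Borel probability measure $\nu$ supported on $\mathrm{Per}(f,k)$ such that $D(\mu_x,\nu)<\varepsilon$.
   Context: $I=[0,1]$. $\mathrm{Per}(f,k)=\{x: f^k(x)=x,\ f^i(x)\ne x,\ 1\le i<k\}$. For $A\subset I$, $B(A,\varepsilon)=\{y\in I: |y-a|<\varepsilon \text{ for some } a\in A\}$. The Prohorov metric on Borel probability measures on $I$ is $D(\mu,\nu)=\inf\{\varepsilon>0: \mu(A)\le\nu(B(A,\varepsilon))+\varepsilon \text{ and } \nu(A)\le\mu(B(A,\varepsilon))+\varepsilon \text{ for all Borel } A\subset I\}$. A Cantor set is a nonempty compact, perfect, totally disconnected set. *)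

theory Defs
  imports "HOL-Probability.Probability"
begin

definition unitI :: "real set" where "unitI = {0..1}"

definition Per :: "(real \<Rightarrow> real) \<Rightarrow> nat \<Rightarrow> real set" where
  "Per f k = {x \<in> unitI. (f ^^ k) x = x \<and> (\<forall>i. 1 \<le> i \<and> i < k \<longrightarrow> (f ^^ i) x \<noteq> x)}"

definition orbit :: "(real \<Rightarrow> real) \<Rightarrow> real \<Rightarrow> real set" where
  "orbit f x = {(f ^^ n) x | n. True}"

definition cantor_set :: "real set \<Rightarrow> bool" where
  "cantor_set S \<longleftrightarrow> S \<noteq> {} \<and> compact S \<and> (\<forall>x\<in>S. x islimpt S)
     \<and> (\<forall>C. C \<subseteq> S \<and> connected C \<longrightarrow> (\<forall>a\<in>C. \<forall>b\<in>C. a = b))"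

abbreviation borelI :: "real measure" where "borelI \<equiv> restrict_space borel unitI"

definition is_prob_I :: "real measure \<Rightarrow> bool" where
  "is_prob_I M \<longleftrightarrow> prob_space M \<and> sets M = sets borelI"

definition Bnbhd :: "real set \<Rightarrow> real \<Rightarrow> real set" where
  "Bnbhd A e = {y \<in> unitI. \<exists>a\<in>A. \<bar>y - a\<bar> < e}"

definition prohorov :: "real measure \<Rightarrow> real measure \<Rightarrow> real" where
  "prohorov \<mu> \<nu> = Inf {e. e > 0 \<and> (\<forall>A \<in> sets borelI.
       measure \<mu> A \<le> measure \<nu> (Bnbhd A e) + e \<and> measure \<nu> A \<le> measure \<mu> (Bnbhd A e) + e)}"

definition f_invariant :: "(real \<Rightarrow> real) \<Rightarrow> real measure \<Rightarrow> bool" where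
  "f_invariant f M \<longleftrightarrow> (\<forall>A \<in> sets M. measure M (f -` A \<inter> unitI) = measure M A)"

end

(* mu is carried by the orbit of x, a finite subset Q of the perfect compact set Per f k.
   A perfect set contains, inside any ball around one of its points, a binary tree of nested,
   pairwise disjoint closed balls with radii tending to 0; following the branches gives an
   injective measurable map from the coin-tossing space, and the image of the fair coin measure
   is a non-atomic probability measure on Per f k concentrated within distance delta of q.
   Replacing each point mass mu{q} at q by mu{q} times this measure moves no mass by delta or
   more, so the Prohorov distance is at most delta. *)

theory Submission
  imports Defs
begin

section \<open>Cantor space\<close>

abbreviation coin_flips :: "(nat \<Rightarrow> bool) measure" where
  "coin_flips \<equiv> PiM UNIV (\<lambda>_. measure_pmf (bernoulli_pmf (1/2)))"

lemma prob_space_coin_flips: "prob_space coin_flips"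
  by (rule prob_space_PiM) (simp add: prob_space_measure_pmf)

lemma measurable_coin_flips_prefix:
  "(\<lambda>\<omega>. map \<omega> [0..<n]) \<in> measurable coin_flips (count_space UNIV)"
proof (induction n)
  case (Suc n)
  have "(\<lambda>\<omega>. (\<lambda>s \<omega>. s @ [\<omega> n]) (map \<omega> [0..<n]) \<omega>) \<in> measurable coin_flips (count_space UNIV)"
  proof (rule measurable_compose_countable'[OF _ Suc])
    fix s :: "bool list"
    have "(\<lambda>\<omega>. \<omega> n) \<in> measurable coin_flips (measure_pmf (bernoulli_pmf (1/2)))"
      by (rule measurable_component_singleton) simp
    then show "(\<lambda>\<omega>. s @ [\<omega> n]) \<in> measurable coin_flips (count_space UNIV)"
      by (rule measurable_compose) simp
  qed simp
  then show ?case by simp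
qed simp

lemma coin_flips_singleton: "measure coin_flips {\<omega>} = 0"
proof -
  interpret prob_space coin_flips by (rule prob_space_coin_flips)
  have "measure coin_flips {\<omega>} \<le> (1/2) ^ n" for n
  proof -
    define cylinder where "cylinder = prod_emb UNIV (\<lambda>_. measure_pmf (bernoulli_pmf (1/2)))
      {..<n} (PiE {..<n} (\<lambda>i. {\<omega> i}))"
    have "emeasure coin_flips cylinder = (\<Prod>i<n. emeasure (measure_pmf (bernoulli_pmf (1/2))) {\<omega> i})"
      unfolding cylinder_def by (rule emeasure_PiM_emb) (auto simp: prob_space_measure_pmf)
    also have "\<dots> = (\<Prod>i<n. ennreal (1/2))"
      by (intro prod.cong refl)
        (simp add: emeasure_pmf_single pmf_bernoulli_True pmf_bernoulli_False split: bool.split)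
    also have "\<dots> = ennreal ((1/2) ^ n)"
      by (subst prod_ennreal) auto
    finally have "measure coin_flips cylinder = (1/2) ^ n"
      by (simp add: measure_def)
    moreover have "cylinder \<in> sets coin_flips"
      unfolding cylinder_def by (rule sets_PiM_I) auto
    moreover have "{\<omega>} \<subseteq> cylinder"
      by (auto simp: cylinder_def prod_emb_def)
    ultimately show ?thesis
      using finite_measure_mono by metis
  qed
  then have "measure coin_flips {\<omega>} \<le> 0"
    by (intro LIMSEQ_le_const[OF LIMSEQ_power_zero]) auto
  then show ?thesis
    using measure_nonneg antisym by blast
qed

section \<open>Cantor sets in perfect sets\<close>

lemma perfect_set_disjoint_cballs:
  fixes K :: "'a::metric_space set"
  assumes perfect: "\<forall>x\<in>K. x islimpt K" and "c \<in> K" "\<rho> > 0"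
  obtains c' s where "c' \<in> K" "0 < s" "s \<le> \<rho> / 2" "cball c' s \<subseteq> cball c \<rho>"
    "cball c s \<inter> cball c' s = {}"
proof -
  obtain c' where c': "c' \<in> K" "c' \<noteq> c" "dist c' c < \<rho> / 2"
    using assms islimpt_approachable[of c K] by (metis half_gt_zero)
  define s where "s = min (dist c' c / 3) (\<rho> / 4)"
  have s: "0 < s" "3 * s \<le> dist c' c" "s \<le> \<rho> / 4"
    using c' \<open>\<rho> > 0\<close> by (auto simp: s_def)
  have "cball c' s \<subseteq> cball c \<rho>"
  proof
    fix y assume "y \<in> cball c' s"
    then show "y \<in> cball c \<rho>"
      using c' s dist_triangle[of c y c'] by (simp add: dist_commute)
  qed
  moreover have "cball c s \<inter> cball c' s = {}"
  proof (rule ccontr)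
    assume "cball c s \<inter> cball c' s \<noteq> {}"
    then obtain y where "dist c y \<le> s" "dist c' y \<le> s" by auto
    then show False
      using s dist_triangle[of c' c y] by (simp add: dist_commute)
  qed
  ultimately show ?thesis
    using that c' s by simp
qed

lemma perfect_set_cball_tree:
  fixes K :: "'a::metric_space set"
  assumes perfect: "\<forall>x\<in>K. x islimpt K" and "p \<in> K" "r > 0"
  obtains c :: "bool list \<Rightarrow> 'a" and \<rho> :: "bool list \<Rightarrow> real"
  where "c [] = p" "\<And>t. c t \<in> K" "\<And>t. 0 < \<rho> t" "\<And>t. \<rho> t \<le> r / 2 ^ length t"
    "\<And>t b. cball (c (t @ [b])) (\<rho> (t @ [b])) \<subseteq> cball (c t) (\<rho> t)"
    "\<And>t. cball (c (t @ [False])) (\<rho> (t @ [False])) \<inter> cball (c (t @ [True])) (\<rho> (t @ [True])) = {}"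
proof -
  have "\<forall>z \<rho>. \<exists>z' s. z \<in> K \<and> \<rho> > 0 \<longrightarrow> z' \<in> K \<and> 0 < s \<and> s \<le> \<rho> / 2
      \<and> cball z' s \<subseteq> cball z \<rho> \<and> cball z s \<inter> cball z' s = {}"
    using perfect_set_disjoint_cballs[OF perfect] by metis
  then obtain split radius where split: "\<And>z \<rho>. z \<in> K \<Longrightarrow> \<rho> > 0 \<Longrightarrow>
      split z \<rho> \<in> K \<and> 0 < radius z \<rho> \<and> radius z \<rho> \<le> \<rho> / 2
      \<and> cball (split z \<rho>) (radius z \<rho>) \<subseteq> cball z \<rho> \<and> cball z (radius z \<rho>) \<inter> cball (split z \<rho>) (radius z \<rho>) = {}"
    by metis
  define T where "T = foldl (\<lambda>(z, \<rho>) b. (if b then split z \<rho> else z, radius z \<rho>)) (p, r)"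
  have T_snoc: "T (t @ [b]) = (if b then split (fst (T t)) (snd (T t)) else fst (T t), radius (fst (T t)) (snd (T t)))"
    for t b by (simp add: T_def split_beta)
  have T_inv: "fst (T t) \<in> K \<and> 0 < snd (T t) \<and> snd (T t) \<le> r / 2 ^ length t" for t
  proof (induction t rule: rev_induct)
    case (snoc b t)
    then show ?case using split[of "fst (T t)" "snd (T t)"] by (auto simp: T_snoc)
  qed (use assms in \<open>simp add: T_def\<close>)
  show ?thesis
  proof (rule that[of "fst \<circ> T" "snd \<circ> T"])
    fix t b
    show "cball ((fst \<circ> T) (t @ [b])) ((snd \<circ> T) (t @ [b])) \<subseteq> cball ((fst \<circ> T) t) ((snd \<circ> T) t)"
      using split[of "fst (T t)" "snd (T t)"] T_inv[of t] by (auto simp: T_snoc)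
  qed (use T_inv split T_snoc in \<open>auto simp: T_def\<close>)
qed

lemma cball_tree_branch_points:
  fixes c :: "bool list \<Rightarrow> 'a::complete_space"
  assumes \<rho>_nonneg: "\<And>t. 0 \<le> \<rho> t" and \<rho>_le: "\<And>t. \<rho> t \<le> r / 2 ^ length t"
    and nested_step: "\<And>t b. cball (c (t @ [b])) (\<rho> (t @ [b])) \<subseteq> cball (c t) (\<rho> t)"
  obtains \<phi> where "\<And>\<omega> n. \<phi> \<omega> \<in> cball (c (map \<omega> [0..<n])) (\<rho> (map \<omega> [0..<n]))"
    "\<And>\<omega>. (\<lambda>n. c (map \<omega> [0..<n])) \<longlonglongrightarrow> \<phi> \<omega>"
proof -
  define B where "B t = cball (c t) (\<rho> t)" for t
  have B_small: "dist x (c t) \<le> r / 2 ^ length t" if "x \<in> B t" for x t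
    using that \<rho>_le[of t] by (simp add: B_def dist_commute)
  have nested: "B (map \<omega> [0..<m]) \<subseteq> B (map \<omega> [0..<n])" if "n \<le> m" for \<omega> m n
    using that
  proof (induction rule: dec_induct)
    case (step m)
    then show ?case using nested_step[of "map \<omega> [0..<m]" "\<omega> m"] by (simp add: B_def)
  qed simp
  have small: "\<exists>n. \<forall>x\<in>B (map \<omega> [0..<n]). \<forall>y\<in>B (map \<omega> [0..<n]). dist x y < \<epsilon>"
    if "\<epsilon> > 0" for \<omega> \<epsilon>
  proof -
    obtain n where n: "r / 2 ^ n < \<epsilon> / 2"
      using order_tendstoD(2)[OF LIMSEQ_divide_realpow_zero[of 2 r], of "\<epsilon> / 2"] \<open>\<epsilon> > 0\<close>
      by (auto dest: eventually_happens)
    have "dist x y < \<epsilon>" if "x \<in> B (map \<omega> [0..<n])" "y \<in> B (map \<omega> [0..<n])" for x y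
      using B_small[OF that(1)] B_small[OF that(2)] dist_triangle2[of x y "c (map \<omega> [0..<n])"] n
      by (simp only: length_map length_upt diff_zero)
    then show ?thesis by blast
  qed
  have "\<exists>a. \<forall>n. a \<in> B (map \<omega> [0..<n])" for \<omega>
  proof -
    obtain a where "\<And>n. a \<in> B (map \<omega> [0..<n])"
    proof (rule decreasing_closed_nest[of "\<lambda>n. B (map \<omega> [0..<n])"])
      show "closed (B (map \<omega> [0..<n]))" for n
        by (simp add: B_def)
      show "B (map \<omega> [0..<n]) \<noteq> {}" for n
        using \<rho>_nonneg[of "map \<omega> [0..<n]"] by (auto simp: B_def)
      show "B (map \<omega> [0..<n]) \<subseteq> B (map \<omega> [0..<m])" if "m \<le> n" for m n
        using that by (rule nested)
    qed (blast intro: small)+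
    then show ?thesis by blast
  qed
  then obtain \<phi> where \<phi>_in_B: "\<And>\<omega> n. \<phi> \<omega> \<in> B (map \<omega> [0..<n])"
    by metis
  have "(\<lambda>n. c (map \<omega> [0..<n])) \<longlonglongrightarrow> \<phi> \<omega>" for \<omega>
  proof -
    have "norm (dist (c (map \<omega> [0..<n])) (\<phi> \<omega>)) \<le> r / 2 ^ n" for n
      using B_small[OF \<phi>_in_B[of \<omega> n]] by (simp add: dist_commute)
    then have "(\<lambda>n. dist (c (map \<omega> [0..<n])) (\<phi> \<omega>)) \<longlonglongrightarrow> 0"
      by (intro Lim_null_comparison[OF always_eventually LIMSEQ_divide_realpow_zero[of 2 r]]) auto
    then show ?thesis
      by (rule tendsto_dist_iff[THEN iffD2])
  qed
  with \<phi>_in_B show ?thesis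
    using that unfolding B_def by blast
qed

lemma coin_flips_embeds_into_perfect_set:
  fixes K :: "'a::complete_space set"
  assumes "closed K" and perfect: "\<forall>x\<in>K. x islimpt K" and "p \<in> K" "r > 0"
  obtains \<phi> where "\<phi> \<in> borel_measurable coin_flips" "inj \<phi>" "\<And>\<omega>. \<phi> \<omega> \<in> K \<inter> cball p r"
proof -
  obtain c \<rho> where "c [] = p" and c_in_K: "\<And>t. c t \<in> K" and \<rho>_pos: "\<And>t. 0 < \<rho> t"
    and \<rho>_le: "\<And>t. \<rho> t \<le> r / 2 ^ length t"
    and nested_step: "\<And>t b. cball (c (t @ [b])) (\<rho> (t @ [b])) \<subseteq> cball (c t) (\<rho> t)"
    and siblings_disjoint:
      "\<And>t. cball (c (t @ [False])) (\<rho> (t @ [False])) \<inter> cball (c (t @ [True])) (\<rho> (t @ [True])) = {}"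
    using perfect_set_cball_tree[OF perfect \<open>p \<in> K\<close> \<open>r > 0\<close>] by blast
  obtain \<phi> where \<phi>_in_ball: "\<And>\<omega> n. \<phi> \<omega> \<in> cball (c (map \<omega> [0..<n])) (\<rho> (map \<omega> [0..<n]))"
    and \<phi>_limit: "\<And>\<omega>. (\<lambda>n. c (map \<omega> [0..<n])) \<longlonglongrightarrow> \<phi> \<omega>"
    using cball_tree_branch_points[of \<rho> r c] \<rho>_pos \<rho>_le nested_step by (metis less_imp_le)
  show ?thesis
  proof (rule that)
    show "\<phi> \<in> borel_measurable coin_flips"
    proof (rule borel_measurable_LIMSEQ_metric[OF _ \<phi>_limit])
      fix n
      show "(\<lambda>\<omega>. c (map \<omega> [0..<n])) \<in> borel_measurable coin_flips"
        by (rule measurable_compose[OF measurable_coin_flips_prefix]) simp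
    qed
    show "\<phi> \<omega> \<in> K \<inter> cball p r" for \<omega>
    proof
      show "\<phi> \<omega> \<in> K"
        using closed_sequentially[OF \<open>closed K\<close> _ \<phi>_limit] c_in_K by blast
      show "\<phi> \<omega> \<in> cball p r"
        using \<phi>_in_ball[of \<omega> 0] \<rho>_le[of "[]"] \<open>c [] = p\<close> by simp
    qed
    show "inj \<phi>"
    proof (rule injI, rule ccontr)
      fix \<omega> \<omega>' assume "\<phi> \<omega> = \<phi> \<omega>'" "\<omega> \<noteq> \<omega>'"
      then obtain n where "\<omega> n \<noteq> \<omega>' n" "\<forall>j<n. \<omega> j = \<omega>' j"
        using exists_least_iff[of "\<lambda>i. \<omega> i \<noteq> \<omega>' i"] by blast
      define t where "t = map \<omega> [0..<n]"
      have "map \<omega>' [0..<n] = t"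
        using \<open>\<forall>j<n. \<omega> j = \<omega>' j\<close> by (simp add: t_def)
      have "\<phi> \<omega>' \<in> cball (c (map \<omega>' [0..<n] @ [\<omega>' n])) (\<rho> (map \<omega>' [0..<n] @ [\<omega>' n]))"
        using \<phi>_in_ball[of \<omega>' "Suc n"] by simp
      then have "\<phi> \<omega> \<in> cball (c (t @ [\<omega>' n])) (\<rho> (t @ [\<omega>' n]))"
        unfolding \<open>map \<omega>' [0..<n] = t\<close> \<open>\<phi> \<omega> = \<phi> \<omega>'\<close> .
      moreover have "\<phi> \<omega> \<in> cball (c (t @ [\<omega> n])) (\<rho> (t @ [\<omega> n]))"
        using \<phi>_in_ball[of \<omega> "Suc n"] by (simp add: t_def)
      ultimately show False
        using siblings_disjoint[of t] \<open>\<omega> n \<noteq> \<omega>' n\<close> by (cases "\<omega> n") auto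
    qed
  qed
qed

section \<open>Measures on the unit interval\<close>

lemma sets_borelI_iff: "S \<in> sets borelI \<longleftrightarrow> S \<in> sets borel \<and> S \<subseteq> unitI"
  by (subst sets_restrict_space_iff) (auto simp: unitI_def)

lemma space_borelI [simp]: "space borelI = unitI"
  by (simp add: space_restrict_space)

lemma Bnbhd_in_sets: "Bnbhd A \<delta> \<in> sets borelI"
proof -
  have "Bnbhd A \<delta> = unitI \<inter> (\<Union>a\<in>A. ball a \<delta>)"
    by (auto simp: Bnbhd_def dist_real_def abs_minus_commute)
  moreover have "unitI \<inter> (\<Union>a\<in>A. ball a \<delta>) \<in> sets borel"
    by (intro sets.Int borel_closed borel_open) (auto simp: unitI_def)
  ultimately show ?thesis
    by (simp add: sets_borelI_iff)
qed

lemma measure_distr_singleton_inj: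
  assumes "\<phi> \<in> measurable M N" "inj \<phi>" "\<And>\<omega>. measure M {\<omega>} = 0"
  shows "measure (distr M N \<phi>) {y} = 0"
proof (cases "{y} \<in> sets N")
  case True
  have "\<phi> -` {y} \<inter> space M \<subseteq> {inv \<phi> y}"
    using \<open>inj \<phi>\<close> inv_f_eq by fastforce
  then have "\<phi> -` {y} \<inter> space M = {} \<or> \<phi> -` {y} \<inter> space M = {inv \<phi> y}"
    by (rule subset_singletonD)
  then show ?thesis
    using measure_distr[OF assms(1) True] assms(3) by auto
qed (simp add: measure_notin_sets)

lemma nonatomic_measure_near_point:
  assumes "closed K" "\<forall>x\<in>K. x islimpt K" "K \<subseteq> unitI" "q \<in> K" "\<delta> > 0"
  shows "\<exists>N. is_prob_I N \<and> (\<forall>y. measure N {y} = 0) \<and> (AE y in N. y \<in> K \<and> dist y q < \<delta>)"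
proof -
  obtain \<phi> where \<phi>: "\<phi> \<in> borel_measurable coin_flips" "inj \<phi>" "\<And>\<omega>. \<phi> \<omega> \<in> K \<inter> cball q (\<delta> / 2)"
    using coin_flips_embeds_into_perfect_set[of K q "\<delta> / 2"] assms by auto
  have \<phi>_meas: "\<phi> \<in> measurable coin_flips borelI"
    using \<phi> assms(3) by (intro measurable_restrict_space2) auto
  define N where "N = distr coin_flips borelI \<phi>"
  have "is_prob_I N"
    unfolding is_prob_I_def N_def
    using prob_space.prob_space_distr[OF prob_space_coin_flips \<phi>_meas] by simp
  moreover have "measure N {y} = 0" for y
    unfolding N_def using \<phi>_meas \<phi>(2) coin_flips_singleton by (rule measure_distr_singleton_inj)
  moreover have "AE y in N. y \<in> K \<and> dist y q < \<delta>"
  proof -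
    have "{y \<in> space borelI. y \<in> K \<and> dist y q < \<delta>} = K \<inter> ball q \<delta>"
      using assms(3) by (auto simp: dist_commute)
    moreover have "K \<inter> ball q \<delta> \<in> sets borelI"
      using assms(1,3) sets.Int[OF borel_closed borel_open] by (auto simp: sets_borelI_iff)
    moreover have "AE \<omega> in coin_flips. \<phi> \<omega> \<in> K \<and> dist (\<phi> \<omega>) q < \<delta>"
    proof (rule AE_I2)
      show "\<phi> \<omega> \<in> K \<and> dist (\<phi> \<omega>) q < \<delta>" for \<omega>
        using \<phi>(3)[of \<omega>] \<open>\<delta> > 0\<close> by (auto simp: dist_commute)
    qed
    ultimately show ?thesis
      unfolding N_def by (subst AE_distr_iff[OF \<phi>_meas]) simp_all
  qed
  ultimately show ?thesis by blast
qed

lemma measure_eq_sum_finite_support: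
  assumes "prob_space M" "finite Q" "\<And>q. q \<in> Q \<Longrightarrow> {q} \<in> sets M" "measure M Q = 1"
    and "A \<in> sets M"
  shows "measure M A = (\<Sum>q\<in>Q. measure M {q} * indicator A q)"
proof -
  interpret prob_space M by fact
  have "Q \<in> sets M"
    by (rule sets.countable) (use assms(2,3) in \<open>auto intro: countable_finite\<close>)
  then have "AE x in M. x \<in> Q"
    using prob_eq_1 assms(4) by blast
  then have "AE x in M. x \<in> A \<longleftrightarrow> x \<in> Q \<inter> A"
    by eventually_elim blast
  then have "measure M A = measure M (Q \<inter> A)"
    using \<open>A \<in> sets M\<close> \<open>Q \<in> sets M\<close> by (intro finite_measure_eq_AE sets.Int)
  also have "\<dots> = (\<Sum>q\<in>Q \<inter> A. measure M {q})"
    using assms(2,3) by (intro measure_eq_sum_singleton) (simp_all add: emeasure_eq_measure)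
  also have "\<dots> = (\<Sum>q\<in>Q. measure M {q} * indicator A q)"
    unfolding sum.inter_restrict[OF assms(2)] by (intro sum.cong refl) (simp add: indicator_def)
  finally show ?thesis .
qed

lemma finite_mixture_prob_space:
  fixes N :: "'i \<Rightarrow> 'a measure"
  assumes "finite I" and w_nonneg: "\<And>i. i \<in> I \<Longrightarrow> w i \<ge> 0" and "sum w I = 1"
    and N: "\<And>i. i \<in> I \<Longrightarrow> prob_space (N i)" "\<And>i. i \<in> I \<Longrightarrow> sets (N i) = sets M"
  obtains \<nu> where "prob_space \<nu>" "sets \<nu> = sets M"
    "\<And>A. A \<in> sets M \<Longrightarrow> measure \<nu> A = (\<Sum>i\<in>I. w i * measure (N i) A)"
proof -
  define mix where "mix A = (\<Sum>i\<in>I. ennreal (w i) * emeasure (N i) A)" for A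
  define \<nu> where "\<nu> = measure_of (space M) (sets M) mix"
  have "countably_additive (sets M) mix"
  proof (rule countably_additiveI)
    fix F :: "nat \<Rightarrow> 'a set" assume F: "range F \<subseteq> sets M" "disjoint_family F"
    have "(\<Sum>n. mix (F n)) = (\<Sum>i\<in>I. \<Sum>n. ennreal (w i) * emeasure (N i) (F n))"
      unfolding mix_def by (rule suminf_sum) simp
    also have "\<dots> = mix (\<Union>n. F n)"
      unfolding mix_def using F N(2) by (intro sum.cong refl) (simp add: ennreal_suminf_cmult suminf_emeasure)
    finally show "(\<Sum>n. mix (F n)) = mix (\<Union>n. F n)" .
  qed
  then have emeasure_\<nu>: "emeasure \<nu> A = mix A" if "A \<in> sets M" for A
    unfolding \<nu>_def using that
    by (intro emeasure_measure_of_sigma sets.sigma_algebra_axioms) (auto simp: positive_def mix_def)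
  have mix_real: "mix A = ennreal (\<Sum>i\<in>I. w i * measure (N i) A)" for A
  proof -
    have "mix A = (\<Sum>i\<in>I. ennreal (w i * measure (N i) A))"
      unfolding mix_def using N(1)
      by (intro sum.cong refl) (simp add: finite_measure.emeasure_eq_measure[OF prob_space.finite_measure] ennreal_mult w_nonneg)
    also have "\<dots> = ennreal (\<Sum>i\<in>I. w i * measure (N i) A)"
      by (rule sum_ennreal) (simp add: w_nonneg)
    finally show ?thesis .
  qed
  have measure_\<nu>: "measure \<nu> A = (\<Sum>i\<in>I. w i * measure (N i) A)" if "A \<in> sets M" for A
    using emeasure_\<nu>[OF that] mix_real[of A] by (simp add: measure_def sum_nonneg w_nonneg)
  have "(\<Sum>i\<in>I. w i * measure (N i) (space M)) = sum w I"
    using N sets_eq_imp_space_eq[OF N(2)]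
    by (intro sum.cong refl) (metis prob_space.prob_space mult.right_neutral)
  then have "prob_space \<nu>"
    using emeasure_\<nu>[of "space M"] mix_real[of "space M"] \<open>sum w I = 1\<close>
    by (intro prob_spaceI) (simp add: \<nu>_def)
  then show ?thesis
    using that measure_\<nu> by (simp add: \<nu>_def)
qed

lemma prohorov_le:
  assumes "\<delta> > 0"
    and "\<And>A. A \<in> sets borelI \<Longrightarrow>
      measure \<mu> A \<le> measure \<nu> (Bnbhd A \<delta>) + \<delta> \<and> measure \<nu> A \<le> measure \<mu> (Bnbhd A \<delta>) + \<delta>"
  shows "prohorov \<mu> \<nu> \<le> \<delta>"
  unfolding prohorov_def by (rule cInf_lower) (use assms in \<open>auto intro: bdd_belowI[of _ 0]\<close>)

lemma prohorov_le_of_spread_point_masses: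
  fixes Q :: "real set" and N :: "real \<Rightarrow> real measure"
  assumes "finite Q" "Q \<subseteq> unitI" "\<And>q. w q \<ge> 0" "\<delta> > 0"
    and \<mu>: "\<And>A. A \<in> sets borelI \<Longrightarrow> measure \<mu> A = (\<Sum>q\<in>Q. w q * indicator A q)"
    and \<nu>: "\<And>A. A \<in> sets borelI \<Longrightarrow> measure \<nu> A = (\<Sum>q\<in>Q. w q * measure (N q) A)"
    and N: "\<And>q. q \<in> Q \<Longrightarrow> is_prob_I (N q)" "\<And>q. q \<in> Q \<Longrightarrow> AE y in N q. dist y q < \<delta>"
  shows "prohorov \<mu> \<nu> \<le> \<delta>"
proof (rule prohorov_le[OF \<open>\<delta> > 0\<close>])
  fix A assume A: "A \<in> sets borelI"
  have lower: "indicator A q \<le> measure (N q) (Bnbhd A \<delta>)"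
    and upper: "measure (N q) A \<le> indicator (Bnbhd A \<delta>) q" if "q \<in> Q" for q
  proof -
    interpret prob_space "N q"
      using N(1)[OF that] by (simp add: is_prob_I_def)
    have sets_N: "sets (N q) = sets borelI" and space_N: "space (N q) = unitI"
      using N(1)[OF that] sets_eq_imp_space_eq[of "N q" borelI] by (auto simp: is_prob_I_def)
    have near: "AE y in N q. y \<in> unitI \<and> \<bar>y - q\<bar> < \<delta>"
      using N(2)[OF that] AE_space[of "N q"] unfolding space_N by eventually_elim (simp add: dist_real_def)
    have "q \<in> unitI"
      using that assms(2) by blast
    show "indicator A q \<le> measure (N q) (Bnbhd A \<delta>)"
    proof (cases "q \<in> A")
      case True
      from near have "AE y in N q. y \<in> Bnbhd A \<delta>"
        by eventually_elim (use True in \<open>auto simp: Bnbhd_def\<close>)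
      then show ?thesis
        using True prob_eq_1[of "Bnbhd A \<delta>"] Bnbhd_in_sets by (simp add: sets_N)
    qed simp
    show "measure (N q) A \<le> indicator (Bnbhd A \<delta>) q"
    proof (cases "q \<in> Bnbhd A \<delta>")
      case False
      from near have "AE y in N q. y \<notin> A"
        by eventually_elim (use False \<open>q \<in> unitI\<close> in \<open>auto simp: Bnbhd_def abs_minus_commute\<close>)
      then show ?thesis
        using False prob_eq_0[of A] A by (simp add: sets_N)
    qed simp
  qed
  have "measure \<mu> A \<le> (\<Sum>q\<in>Q. w q * measure (N q) (Bnbhd A \<delta>))"
    unfolding \<mu>[OF A] using lower assms(3) by (intro sum_mono mult_left_mono) auto
  also have "\<dots> = measure \<nu> (Bnbhd A \<delta>)"
    using \<nu>[OF Bnbhd_in_sets] by simp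
  finally have "measure \<mu> A \<le> measure \<nu> (Bnbhd A \<delta>) + \<delta>"
    using \<open>\<delta> > 0\<close> by simp
  moreover have "measure \<nu> A \<le> (\<Sum>q\<in>Q. w q * indicator (Bnbhd A \<delta>) q)"
    unfolding \<nu>[OF A] using upper assms(3) by (intro sum_mono mult_left_mono) auto
  then have "measure \<nu> A \<le> measure \<mu> (Bnbhd A \<delta>) + \<delta>"
    using \<mu>[OF Bnbhd_in_sets] \<open>\<delta> > 0\<close> by simp
  ultimately show "measure \<mu> A \<le> measure \<nu> (Bnbhd A \<delta>) + \<delta> \<and> measure \<nu> A \<le> measure \<mu> (Bnbhd A \<delta>) + \<delta>" ..
qed

lemma nonatomic_measure_near_finitely_supported:
  assumes "closed K" "\<forall>x\<in>K. x islimpt K" "K \<subseteq> unitI" "finite Q" "Q \<subseteq> K"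
    and "is_prob_I \<mu>" "measure \<mu> Q = 1" "\<delta> > 0"
  shows "\<exists>\<nu>. is_prob_I \<nu> \<and> (\<forall>y. measure \<nu> {y} = 0) \<and> measure \<nu> K = 1 \<and> prohorov \<mu> \<nu> \<le> \<delta>"
proof -
  have "\<forall>q\<in>Q. \<exists>N. is_prob_I N \<and> (\<forall>y. measure N {y} = 0) \<and> (AE y in N. y \<in> K \<and> dist y q < \<delta>)"
    using nonatomic_measure_near_point[OF assms(1-3) _ assms(8)] assms(5) by blast
  then obtain N where N_prob: "\<And>q. q \<in> Q \<Longrightarrow> is_prob_I (N q)"
    and N_nonatomic: "\<And>q y. q \<in> Q \<Longrightarrow> measure (N q) {y} = 0"
    and N_near: "\<And>q. q \<in> Q \<Longrightarrow> AE y in N q. y \<in> K \<and> dist y q < \<delta>"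
    by metis
  have N_sets: "sets (N q) = sets borelI" if "q \<in> Q" for q
    using N_prob[OF that] by (simp add: is_prob_I_def)
  have K_sets: "K \<in> sets borelI"
    using assms(1,3) by (simp add: sets_borelI_iff borel_closed)
  have finite_sets: "S \<in> sets borelI" if "S \<subseteq> Q" for S
    using that assms(3-5) by (auto simp: sets_borelI_iff intro!: borel_closed finite_imp_closed
      dest: finite_subset)
  define w where "w q = measure \<mu> {q}" for q
  have \<mu>: "measure \<mu> A = (\<Sum>q\<in>Q. w q * indicator A q)" if "A \<in> sets borelI" for A
    unfolding w_def using assms(6,4,7) finite_sets that
    by (intro measure_eq_sum_finite_support) (auto simp: is_prob_I_def)
  have "sum w Q = 1"
    using \<mu>[OF finite_sets[OF order_refl]] assms(7) by simp
  then obtain \<nu> where "prob_space \<nu>" and \<nu>_sets: "sets \<nu> = sets borelI"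
    and \<nu>: "\<And>A. A \<in> sets borelI \<Longrightarrow> measure \<nu> A = (\<Sum>q\<in>Q. w q * measure (N q) A)"
    using finite_mixture_prob_space[OF assms(4), of w N borelI] N_prob N_sets
    by (auto simp: w_def is_prob_I_def)
  have "measure \<nu> {y} = 0" for y
    using \<nu>[of "{y}"] N_nonatomic \<nu>_sets by (cases "{y} \<in> sets borelI") (simp_all add: measure_notin_sets)
  moreover have "measure \<nu> K = 1"
  proof -
    have "measure (N q) K = 1" if "q \<in> Q" for q
      using N_prob[OF that] N_near[OF that] K_sets
      by (auto simp: is_prob_I_def prob_space.prob_eq_1 elim: AE_mp)
    then show ?thesis
      using \<nu>[OF K_sets] \<open>sum w Q = 1\<close> by simp
  qed
  moreover have "prohorov \<mu> \<nu> \<le> \<delta>"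
    using assms(3,5) N_near
    by (intro prohorov_le_of_spread_point_masses[OF assms(4) _ _ assms(8) \<mu> \<nu> N_prob])
      (auto simp: w_def elim: AE_mp)
  ultimately show ?thesis
    using \<open>prob_space \<nu>\<close> \<nu>_sets by (auto simp: is_prob_I_def)
qed

section \<open>Periodic orbits\<close>

lemma Per_image:
  assumes "f ` unitI \<subseteq> unitI" "x \<in> Per f k"
  shows "f x \<in> Per f k"
proof -
  have x: "x \<in> unitI" "(f ^^ k) x = x" "\<And>j. 1 \<le> j \<Longrightarrow> j < k \<Longrightarrow> (f ^^ j) x \<noteq> x"
    using assms(2) by (auto simp: Per_def)
  have "(f ^^ k) (f x) = f x"
    using x(2) by (metis funpow_swap1)
  moreover have "(f ^^ j) (f x) \<noteq> f x" if "1 \<le> j" "j < k" for j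
  proof
    assume fixed: "(f ^^ j) (f x) = f x"
    have shift: "(f ^^ (k - 1)) (f y) = (f ^^ k) y" for y
      using \<open>j < k\<close> by (cases k) (simp_all add: funpow_swap1)
    have "(f ^^ j) x = (f ^^ j) ((f ^^ (k - 1)) (f x))"
      using shift x(2) by simp
    also have "\<dots> = (f ^^ (k - 1)) ((f ^^ j) (f x))"
      by (metis add.commute funpow_add comp_apply)
    also have "\<dots> = x"
      using fixed shift x(2) by simp
    finally show False
      using x(3) that by blast
  qed
  ultimately show ?thesis
    using assms(1) x(1) by (auto simp: Per_def)
qed
lemma orbit_subset_Per:
  assumes "f ` unitI \<subseteq> unitI" "x \<in> Per f k"
  shows "orbit f x \<subseteq> Per f k"
proof -
  have "(f ^^ n) x \<in> Per f k" for n
    by (induction n) (use assms Per_image in auto)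
  then show ?thesis
    by (auto simp: orbit_def)
qed

lemma finite_orbit:
  assumes "(f ^^ k) x = x" "k \<ge> 1"
  shows "finite (orbit f x)"
proof -
  have "orbit f x \<subseteq> (\<lambda>i. (f ^^ i) x) ` {..<k}"
  proof
    fix y assume "y \<in> orbit f x"
    then obtain n where "y = (f ^^ (n mod k)) x"
      using funpow_mod_eq[OF assms(1)] by (auto simp: orbit_def)
    then show "y \<in> (\<lambda>i. (f ^^ i) x) ` {..<k}"
      using assms(2) by simp
  qed
  then show ?thesis
    by (rule finite_subset) simp
qed

theorem mainTheorem5:
  fixes f :: "real \<Rightarrow> real" and k :: nat and x e :: real and \<mu> :: "real measure"
  assumes "continuous_on unitI f" and "f ` unitI \<subseteq> unitI"
    and "k \<ge> 1"
    and "cantor_set (Per f k)"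
    and "x \<in> Per f k" and "e > 0"
    and "is_prob_I \<mu>" and "f_invariant f \<mu>" and "measure \<mu> (orbit f x) = 1"
  shows "\<exists>\<nu>. is_prob_I \<nu> \<and> (\<forall>y. measure \<nu> {y} = 0) \<and> measure \<nu> (Per f k) = 1
              \<and> prohorov \<mu> \<nu> < e"
proof -
  have "closed (Per f k)" "\<forall>y\<in>Per f k. y islimpt Per f k"
    using \<open>cantor_set (Per f k)\<close> by (auto simp: cantor_set_def compact_imp_closed)
  moreover have "Per f k \<subseteq> unitI"
    by (auto simp: Per_def)
  moreover have "finite (orbit f x)"
    using \<open>x \<in> Per f k\<close> \<open>k \<ge> 1\<close> by (intro finite_orbit) (auto simp: Per_def)
  moreover have "orbit f x \<subseteq> Per f k"
    using \<open>f ` unitI \<subseteq> unitI\<close> \<open>x \<in> Per f k\<close> by (rule orbit_subset_Per)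
  ultimately obtain \<nu> where "is_prob_I \<nu>" "\<forall>y. measure \<nu> {y} = 0" "measure \<nu> (Per f k) = 1"
    "prohorov \<mu> \<nu> \<le> e / 2"
    using nonatomic_measure_near_finitely_supported[of "Per f k" "orbit f x" \<mu> "e / 2"]
      \<open>e > 0\<close> \<open>is_prob_I \<mu>\<close> \<open>measure \<mu> (orbit f x) = 1\<close>
    by auto
  then show ?thesis
    using \<open>e > 0\<close> by (intro exI[of _ \<nu>]) auto
qed

end
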